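(* Let $G$ be a graph, $\theta$ a real number, and let $u_1,\dots,u_k$ be distinct $\theta$-positive vertices of $G$. Then $\mathrm{mult}(\theta,G\setminus\{u_1,\dots,u_k\})$ is either equal to $\mathrm{mult}(\theta,G)+k$ or at most $\mathrm{mult}(\theta,G)+k-2$.
   Context: All graphs are finite and simple. For a graph $G$ on $n$ vertices, let $p(G,r)$ be the number of $r$-matchings of $G$ ($p(G,0)=1$); the matching polynomial is $\mu(G,x)=\sum_{r=0}^{\lfloor n/2\rfloor}(-1)^r p(G,r)x^{n-2r}$. For real $\theta$, $\mathrm{mult}(\theta,G)$ is the multiplicity of $\theta$ as a root of $\mu(G,x)$ (it is $0$ if $\theta$ is not a root). $G\setminus X$ denotes deletion of the vertex set $X$ and $G\setminus u=G\setminus\{u\}$. A vertex $u$ is $\theta$-positive in $G$ if $\mathrm{mult}(\theta,G\setminus u)=\mathrm{mult}(\theta,G)+1$. *)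

theory Defs
  imports "HOL-Computational_Algebra.Polynomial"
begin

type_synonym 'a graph = "'a set \<times> 'a set set"

definition simple_graph :: "'a graph \<Rightarrow> bool" where
  "simple_graph G \<longleftrightarrow> finite (fst G) \<and>
     (\<forall>e\<in>snd G. e \<subseteq> fst G \<and> card e = 2)"

definition verts :: "'a graph \<Rightarrow> 'a set" where "verts G = fst G"
definition edges :: "'a graph \<Rightarrow> 'a set set" where "edges G = snd G"

definition del_verts :: "'a graph \<Rightarrow> 'a set \<Rightarrow> 'a graph" where
  "del_verts G X = (verts G - X, {e \<in> edges G. e \<inter> X = {}})"

definition matchings :: "'a graph \<Rightarrow> nat \<Rightarrow> 'a set set set" where
  "matchings G r = {M. M \<subseteq> edges G \<and> card M = r \<and>
      (\<forall>e\<in>M. \<forall>f\<in>M. e \<noteq> f \<longrightarrow> e \<inter> f = {})}"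

definition num_matchings :: "'a graph \<Rightarrow> nat \<Rightarrow> nat" where
  "num_matchings G r = card (matchings G r)"

definition matching_poly :: "'a graph \<Rightarrow> real poly" where
  "matching_poly G = (\<Sum>r\<le>card (verts G) div 2.
      monom ((-1) ^ r * real (num_matchings G r)) (card (verts G) - 2 * r))"

definition mult :: "real \<Rightarrow> 'a graph \<Rightarrow> nat" where
  "mult \<theta> G = order \<theta> (matching_poly G)"

definition theta_positive :: "real \<Rightarrow> 'a graph \<Rightarrow> 'a \<Rightarrow> bool" where
  "theta_positive \<theta> G u \<longleftrightarrow> mult \<theta> (del_verts G {u}) = mult \<theta> G + 1"

end

theory Submission
  imports Defs
begin

(*
  Write \<mu>(G) for the matching polynomial, m = mult \<theta> G and f(X) = mult \<theta> (G \ X).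
  When U consists of \<theta>-positive vertices, f(U) \<le> m + |U| by interlacing, and the
  content of the theorem is that f(U) \<noteq> m + |U| - 1.  It follows from three facts:

  (1) Interlacing: deleting one vertex changes the multiplicity by at most one.
  (2) Rigidity: if a \<noteq> b are \<theta>-positive in a graph H, then
      mult \<theta> (H \ {a,b}) \<noteq> mult \<theta> H + 1.
  (3) A purely combinatorial lemma: a set function on the subsets of a finite set U
      with the properties (1), (2) and f{u} = f{} + 1 obeys the dichotomy.

  (1) and (2) come from the vertex recurrence \<mu>(G) = x \<mu>(G\u) - \<Sum>_{w~u} \<mu>(G\{u,w}),
  which yields expressions of \<mu>(G\u) \<mu>'(G) - \<mu>(G) \<mu>'(G\u) and of
  \<mu>(G\u) \<mu>(G\v) - \<mu>(G) \<mu>(G\{u,v}) as sums of squares of polynomials.  A nonzero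
  sum of squares of real polynomials vanishes at \<theta> to even order, and to no higher
  order than any of its summands.
*)

definition all_matchings :: "'a graph \<Rightarrow> 'a set set set" where
  "all_matchings G = {M. M \<subseteq> edges G \<and> (\<forall>e\<in>M. \<forall>f\<in>M. e \<noteq> f \<longrightarrow> e \<inter> f = {})}"

definition mu :: "'a graph \<Rightarrow> real poly" where
  "mu G = (\<Sum>M\<in>all_matchings G. monom ((-1) ^ card M) (card (verts G) - 2 * card M))"

lemma finite_verts: "simple_graph G \<Longrightarrow> finite (verts G)"
  by (simp add: simple_graph_def verts_def)

lemma finite_edges: "simple_graph G \<Longrightarrow> finite (edges G)"
proof -
  assume "simple_graph G"
  hence "edges G \<subseteq> Pow (verts G)" "finite (verts G)"
    by (auto simp: simple_graph_def verts_def edges_def)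
  thus ?thesis by (meson finite_Pow_iff finite_subset)
qed

lemma finite_all_matchings: "simple_graph G \<Longrightarrow> finite (all_matchings G)"
  by (rule finite_subset[of _ "Pow (edges G)"]) (auto simp: all_matchings_def finite_edges)

text \<open>A matching covers 2|M| distinct vertices, so the exponents of \<mu> do not truncate.\<close>
lemma matching_card_le:
  assumes "simple_graph G" "M \<in> all_matchings G"
  shows "2 * card M \<le> card (verts G)"
proof -
  have edge: "\<And>e. e \<in> M \<Longrightarrow> card e = 2 \<and> e \<subseteq> verts G"
    using assms by (auto simp: all_matchings_def simple_graph_def edges_def verts_def)
  have "pairwise disjnt M" using assms(2) by (auto simp: all_matchings_def pairwise_def disjnt_def)
  moreover have "\<And>e. e \<in> M \<Longrightarrow> finite e" using edge by (metis card.infinite zero_neq_numeral)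
  ultimately have "card (\<Union>M) = sum card M" by (rule card_Union_disjoint)
  also have "\<dots> = 2 * card M" using edge by simp
  finally have "card (\<Union>M) = 2 * card M" .
  moreover have "\<Union>M \<subseteq> verts G" using edge by auto
  ultimately show ?thesis using finite_verts[OF assms(1)] by (metis card_mono)
qed

lemma monom_of_nat_card: "finite A \<Longrightarrow> monom (c * real (card A)) k = (\<Sum>M\<in>A. monom c k)"
  by (induction A rule: finite_induct)
    (simp_all add: distrib_left add_monom[symmetric] del: sum_constant)

text \<open>Grouping the matchings by size recovers the defining formula of the matching polynomial.\<close>
lemma matching_poly_eq_mu:
  assumes "simple_graph G" shows "matching_poly G = mu G"
proof -
  let ?n = "card (verts G)"
  let ?h = "\<lambda>M. monom ((-1::real) ^ card M) (?n - 2 * card M)"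
  have "mu G = (\<Sum>r\<le>?n div 2. \<Sum>M\<in>{M. M \<in> all_matchings G \<and> card M = r}. ?h M)"
    unfolding mu_def
    by (rule sum.group[symmetric])
      (auto simp: finite_all_matchings[OF assms] dest: matching_card_le[OF assms])
  also have "\<dots> = (\<Sum>r\<le>?n div 2. monom ((-1) ^ r * real (num_matchings G r)) (?n - 2 * r))"
  proof (rule sum.cong[OF refl])
    fix r
    have "matchings G r = {M \<in> all_matchings G. card M = r}"
      by (auto simp: matchings_def all_matchings_def)
    moreover have "finite {M \<in> all_matchings G. card M = r}"
      using finite_all_matchings[OF assms] by simp
    ultimately show "(\<Sum>M\<in>{M. M \<in> all_matchings G \<and> card M = r}. ?h M)
        = monom ((-1) ^ r * real (num_matchings G r)) (?n - 2 * r)"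
      unfolding num_matchings_def by (simp add: monom_of_nat_card)
  qed
  finally show ?thesis by (simp add: matching_poly_def)
qed

lemma mult_eq_order: "simple_graph G \<Longrightarrow> mult t G = order t (mu G)"
  by (simp add: mult_def matching_poly_eq_mu)

lemma verts_del [simp]: "verts (del_verts G X) = verts G - X"
  by (simp add: del_verts_def verts_def)

lemma edges_del [simp]: "edges (del_verts G X) = {e \<in> edges G. e \<inter> X = {}}"
  by (simp add: del_verts_def edges_def)

lemma del_verts_del_verts: "del_verts (del_verts G A) B = del_verts G (A \<union> B)"
  by (auto simp: del_verts_def verts_def edges_def)

lemma del_verts_empty [simp]: "del_verts G {} = G"
  by (simp add: del_verts_def verts_def edges_def)

lemma del_verts_insert: "del_verts (del_verts G X) {x} = del_verts G (insert x X)"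
  by (simp add: del_verts_del_verts)

lemma simple_graph_del: "simple_graph G \<Longrightarrow> simple_graph (del_verts G X)"
  unfolding simple_graph_def del_verts_def verts_def edges_def by auto

lemma all_matchings_del: "all_matchings (del_verts G X) = {M \<in> all_matchings G. \<forall>e\<in>M. e \<inter> X = {}}"
  by (auto simp: all_matchings_def)

definition nbrs :: "'a graph \<Rightarrow> 'a \<Rightarrow> 'a set" where
  "nbrs G u = {w. {u,w} \<in> edges G}"

lemma nbrsD:
  assumes "simple_graph G" "w \<in> nbrs G u"
  shows "w \<in> verts G" "w \<noteq> u"
proof -
  have "{u,w} \<subseteq> verts G" "card {u,w} = 2" using assms
    by (auto simp: nbrs_def simple_graph_def verts_def edges_def)
  thus "w \<in> verts G" "w \<noteq> u" by auto
qed

lemma finite_nbrs: "simple_graph G \<Longrightarrow> finite (nbrs G u)"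
  by (rule finite_subset[OF _ finite_verts]) (auto dest: nbrsD(1))

lemma nbrs_del: "u \<notin> X \<Longrightarrow> nbrs (del_verts G X) u = nbrs G u - X"
  by (auto simp: nbrs_def)

lemma edge_through_vertex:
  assumes "simple_graph G" "e \<in> edges G" "u \<in> e"
  shows "\<exists>w. e = {u,w}"
proof -
  have "card e = 2" using assms by (auto simp: simple_graph_def edges_def)
  then obtain x y where "e = {x,y}" by (meson card_2_iff)
  thus ?thesis using assms(3) by auto
qed

section \<open>The vertex recurrence\<close>

text \<open>Split the matchings of G into those missing u and those using the edge {u,w}
  for a neighbour w; removing that edge is a bijection onto the matchings of G \ {u,w}.\<close>
lemma mu_recurrence:
  assumes G: "simple_graph G" and u: "u \<in> verts G"
  shows "mu G = [:0,1:] * mu (del_verts G {u}) - (\<Sum>w\<in>nbrs G u. mu (del_verts G {u,w}))"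
proof -
  let ?n = "card (verts G)"
  let ?t = "\<lambda>M. monom ((-1::real) ^ card M) (?n - 2 * card M)"
  define A where "A = {M \<in> all_matchings G. \<forall>e\<in>M. u \<notin> e}"
  define B where "B w = {M \<in> all_matchings G. {u,w} \<in> M}" for w
  have fin: "finite (all_matchings G)" by (rule finite_all_matchings[OF G])
  have fV: "finite (verts G)" by (rule finite_verts[OF G])
  have split: "all_matchings G = A \<union> (\<Union>w\<in>nbrs G u. B w)"
  proof (intro equalityI subsetI)
    fix M assume M: "M \<in> all_matchings G"
    show "M \<in> A \<union> (\<Union>w\<in>nbrs G u. B w)"
    proof (cases "\<forall>e\<in>M. u \<notin> e")
      case False
      then obtain e where e: "e \<in> M" "u \<in> e" by blast
      hence "e \<in> edges G" using M by (auto simp: all_matchings_def)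
      then obtain w where "e = {u,w}" using edge_through_vertex[OF G] e by blast
      thus ?thesis using e M \<open>e \<in> edges G\<close> by (auto simp: nbrs_def B_def)
    qed (use M in \<open>simp add: A_def\<close>)
  qed (auto simp: A_def B_def)
  have "mu G = sum ?t A + sum ?t (\<Union>w\<in>nbrs G u. B w)"
    unfolding mu_def split
    by (rule sum.union_disjoint) (use fin finite_nbrs[OF G] in \<open>auto simp: A_def B_def\<close>)
  also have "sum ?t A = [:0,1:] * mu (del_verts G {u})"
  proof -
    have AM: "A = all_matchings (del_verts G {u})" by (auto simp: A_def all_matchings_del)
    have "?t M = [:0,1:] * monom ((-1) ^ card M) (card (verts G - {u}) - 2 * card M)"
      if "M \<in> A" for M
    proof -
      have "2 * card M \<le> ?n - 1"
        using matching_card_le[OF simple_graph_del[OF G, of "{u}"], of M] that AM u fV by simp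
      moreover have "?n > 0" using u fV card_gt_0_iff by blast
      ultimately have "?n - 2 * card M = Suc (card (verts G - {u}) - 2 * card M)"
        using u fV by simp
      thus ?thesis by (simp add: monom_Suc)
    qed
    thus ?thesis by (simp add: mu_def AM sum_distrib_left)
  qed
  also have "sum ?t (\<Union>w\<in>nbrs G u. B w) = (\<Sum>w\<in>nbrs G u. sum ?t (B w))"
  proof (rule sum.UNION_disjoint)
    show "finite (nbrs G u)" by (rule finite_nbrs[OF G])
    show "\<forall>w\<in>nbrs G u. finite (B w)" using fin by (auto simp: B_def)
    show "\<forall>w\<in>nbrs G u. \<forall>w'\<in>nbrs G u. w \<noteq> w' \<longrightarrow> B w \<inter> B w' = {}"
    proof (intro ballI impI equals0I)
      fix w w' M assume "w \<noteq> w'" "M \<in> B w \<inter> B w'"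
      hence "{u,w} \<noteq> {u,w'}" "{u,w} \<in> M" "{u,w'} \<in> M" "M \<in> all_matchings G"
        by (auto simp: B_def doubleton_eq_iff)
      hence "{u,w} \<inter> {u,w'} = {}" unfolding all_matchings_def by (metis (mono_tags, lifting) mem_Collect_eq)
      thus False by simp
    qed
  qed
  also have "(\<Sum>w\<in>nbrs G u. sum ?t (B w)) = (\<Sum>w\<in>nbrs G u. - mu (del_verts G {u,w}))"
  proof (rule sum.cong[OF refl])
    fix w assume w: "w \<in> nbrs G u"
    let ?e = "{u,w}"
    have eE: "?e \<in> edges G" using w by (simp add: nbrs_def)
    have n2: "card (verts G - {u,w}) = ?n - 2"
      using nbrsD[OF G w] u fV by (simp add: card_Diff_subset)
    show "sum ?t (B w) = - mu (del_verts G {u,w})"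
      unfolding mu_def sum_negf[symmetric]
    proof (rule sum.reindex_bij_witness[of _ "\<lambda>M. insert ?e M" "\<lambda>M. M - {?e}"])
      fix M assume "M \<in> all_matchings (del_verts G {u,w})"
      hence "M \<in> all_matchings G" and M3: "\<forall>f\<in>M. f \<inter> {u,w} = {}"
        by (auto simp: all_matchings_del)
      hence M: "M \<subseteq> edges G" "\<forall>f\<in>M. \<forall>g\<in>M. f \<noteq> g \<longrightarrow> f \<inter> g = {}"
        by (auto simp: all_matchings_def)
      show "insert ?e M - {?e} = M" using M3 by auto
      have "\<forall>f\<in>insert ?e M. \<forall>g\<in>insert ?e M. f \<noteq> g \<longrightarrow> f \<inter> g = {}"
        using M(2) M3 by (simp add: Int_commute)
      thus "insert ?e M \<in> B w" using M(1) eE by (simp add: B_def all_matchings_def)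
    next
      fix M assume "M \<in> B w"
      hence "M \<in> all_matchings G" and eM: "?e \<in> M" by (auto simp: B_def)
      hence M: "M \<subseteq> edges G" "\<forall>f\<in>M. \<forall>g\<in>M. f \<noteq> g \<longrightarrow> f \<inter> g = {}"
        by (auto simp: all_matchings_def)
      show "insert ?e (M - {?e}) = M" using eM by auto
      have "\<forall>f\<in>M - {?e}. f \<inter> {u,w} = {}"
        using mp[OF bspec[OF bspec[OF M(2)] eM]] by blast
      moreover have "M - {?e} \<in> all_matchings G" using M unfolding all_matchings_def by blast
      ultimately show "M - {?e} \<in> all_matchings (del_verts G {u,w})" by (simp add: all_matchings_del)
      have "finite M" using M(1) finite_edges[OF G] by (rule finite_subset)
      hence "card M = Suc (card (M - {?e}))" using eM by (metis card_Suc_Diff1)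
      thus "- monom ((-1) ^ card (M - {?e})) (card (verts (del_verts G {u, w})) - 2 * card (M - {?e}))
          = ?t M"
        using n2 by (simp add: minus_monom)
    qed
  qed
  finally show ?thesis by (simp add: sum_negf)
qed

text \<open>The empty matching gives \<mu> the leading coefficient 1.\<close>
lemma mu_nonzero:
  assumes G: "simple_graph G" shows "mu G \<noteq> 0"
proof -
  let ?n = "card (verts G)"
  have "coeff (mu G) ?n = (\<Sum>M\<in>all_matchings G. if M = {} then 1 else 0)"
    unfolding mu_def coeff_sum
  proof (rule sum.cong[OF refl])
    fix M assume M: "M \<in> all_matchings G"
    have "finite M" using M finite_edges[OF G] by (auto simp: all_matchings_def intro: finite_subset)
    hence "M \<noteq> {} \<Longrightarrow> ?n - 2 * card M \<noteq> ?n"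
      using matching_card_le[OF G M] card_gt_0_iff[of M] by linarith
    thus "coeff (monom ((-1::real) ^ card M) (?n - 2 * card M)) ?n = (if M = {} then 1 else 0)"
      by (auto simp: coeff_monom)
  qed
  also have "\<dots> = 1"
    using finite_all_matchings[OF G] by (simp add: sum.delta all_matchings_def)
  finally show ?thesis by auto
qed

section \<open>Orders of roots\<close>

lemma order_power_mult:
  fixes w :: "'a::idom poly"
  assumes "poly w t \<noteq> 0"
  shows "order t ([:-t,1:] ^ m * w) = m"
proof -
  have "[:-t,1:] ^ m * w \<noteq> 0" using assms by auto
  thus ?thesis using order_power_n_n order_0I[OF assms] by (simp add: order_mult)
qed

lemma order_diff_dominated:
  fixes p q :: "'a::idom poly"
  assumes "q \<noteq> 0" and "[:-t,1:] ^ Suc (order t q) dvd p"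
  shows "p - q \<noteq> 0" and "order t (p - q) = order t q"
proof -
  let ?X = "[:-t,1:]"
  have "?X ^ order t q dvd p"
    using dvd_trans[OF le_imp_power_dvd[of "order t q" "Suc (order t q)"] assms(2)] by simp
  hence lower: "?X ^ order t q dvd p - q" using order_1[of t q] by (rule dvd_diff)
  have upper: "\<not> ?X ^ Suc (order t q) dvd p - q"
  proof
    assume "?X ^ Suc (order t q) dvd p - q"
    with assms(2) have "?X ^ Suc (order t q) dvd p - (p - q)" by (rule dvd_diff)
    thus False using order_2[OF assms(1)] by simp
  qed
  show "p - q \<noteq> 0" using upper by auto
  show "order t (p - q) = order t q" using lower upper by (rule order_unique_lemma)
qed

lemma pderiv_sum: "pderiv (sum f A) = (\<Sum>x\<in>A. pderiv (f x))"
  using higher_pderiv_sum[of 1] by simp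

lemma power_dvd_pderiv:
  fixes p :: "real poly"
  assumes "[:-t,1:] ^ m dvd p" shows "[:-t,1:] ^ (m - 1) dvd pderiv p"
proof -
  let ?X = "[:-t,1:]"
  obtain q where q: "p = ?X ^ m * q" using assms by blast
  have "?X ^ (m - 1) dvd ?X ^ m" by (simp add: le_imp_power_dvd)
  moreover have "?X ^ (m - 1) dvd pderiv (?X ^ m)" by (simp add: pderiv_power dvd_smult)
  ultimately show ?thesis unfolding q pderiv_mult by (simp add: dvd_mult2 dvd_mult)
qed

lemma wronskian_power_dvd:
  fixes p q :: "real poly"
  assumes "[:-t,1:] ^ m dvd p" "[:-t,1:] ^ n dvd q"
  shows "[:-t,1:] ^ (m + n - 1) dvd q * pderiv p - p * pderiv q"
proof -
  let ?X = "[:-t,1:]"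
  have "?X ^ (m + n - 1) dvd ?X ^ n * ?X ^ (m - 1)" "?X ^ (m + n - 1) dvd ?X ^ m * ?X ^ (n - 1)"
    by (simp_all add: power_add[symmetric] le_imp_power_dvd)
  moreover have "?X ^ n * ?X ^ (m - 1) dvd q * pderiv p"
    using assms(2) power_dvd_pderiv[OF assms(1)] by (rule mult_dvd_mono)
  moreover have "?X ^ m * ?X ^ (n - 1) dvd p * pderiv q"
    using assms(1) power_dvd_pderiv[OF assms(2)] by (rule mult_dvd_mono)
  ultimately show ?thesis by (meson dvd_diff dvd_trans)
qed

section \<open>Sums of squares\<close>

text \<open>This holds for squares and is preserved by sums, so it holds
  for all sums of squares.\<close>
definition even_positive :: "real \<Rightarrow> real poly \<Rightarrow> bool" where
  "even_positive t p \<longleftrightarrow> p = 0 \<or> (\<exists>k w. p = [:-t,1:] ^ (2 * k) * w \<and> poly w t > 0)"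

lemma even_positive_square: "even_positive t (q ^ 2)"
proof (cases "q = 0")
  case False
  obtain r where r: "q = [:-t,1:] ^ order t q * r" "\<not> [:-t,1:] dvd r"
    using order_decomp[OF False] by blast
  have "poly r t \<noteq> 0" using r(2) by (simp add: poly_eq_0_iff_dvd)
  moreover have "q ^ 2 = [:-t,1:] ^ (2 * order t q) * r ^ 2"
    by (subst r(1)) (simp add: power_mult_distrib power_mult[symmetric] mult.commute)
  ultimately show ?thesis unfolding even_positive_def by (metis poly_power zero_less_power2)
qed (simp add: even_positive_def)

lemma merge_even_powers:
  fixes r s :: "real poly"
  assumes "poly r t > 0" "poly s t > 0"
  shows "\<exists>w. [:-t,1:] ^ (2 * k) * r + [:-t,1:] ^ (2 * j) * s = [:-t,1:] ^ (2 * min k j) * w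
             \<and> poly w t > 0"
proof -
  have merge: "\<exists>w. [:-t,1:] ^ (2 * k) * r + [:-t,1:] ^ (2 * j) * s = [:-t,1:] ^ (2 * k) * w
      \<and> poly w t > 0" if "k \<le> j" "poly r t > 0" "poly s t > 0" for k j and r s :: "real poly"
  proof (intro exI conjI)
    have "2 * j = 2 * k + 2 * (j - k)" using \<open>k \<le> j\<close> by simp
    hence "[:-t,1:] ^ (2 * j) = [:-t,1:] ^ (2 * k) * [:-t,1:] ^ (2 * (j - k))"
      by (metis power_add)
    thus "[:-t,1:] ^ (2 * k) * r + [:-t,1:] ^ (2 * j) * s
        = [:-t,1:] ^ (2 * k) * (r + [:-t,1:] ^ (2 * (j - k)) * s)"
      by (simp add: algebra_simps)
    have "poly ([:-t,1:] ^ (2 * (j - k)) * s) t \<ge> 0" using that(3) by (simp add: poly_power)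
    thus "poly (r + [:-t,1:] ^ (2 * (j - k)) * s) t > 0" using that(2) by simp
  qed
  show ?thesis
  proof (cases "k \<le> j")
    case False
    thus ?thesis using merge[of j k s r] assms by (simp add: add.commute)
  qed (use merge assms in simp)
qed

lemma even_positive_add:
  assumes p: "even_positive t p" and q: "even_positive t q"
  shows "even_positive t (p + q)"
    and "q \<noteq> 0 \<Longrightarrow> p + q \<noteq> 0 \<and> order t (p + q) \<le> order t q"
proof -
  have "even_positive t (p + q) \<and> (q \<noteq> 0 \<longrightarrow> p + q \<noteq> 0 \<and> order t (p + q) \<le> order t q)"
  proof (cases "p = 0 \<or> q = 0")
    case False
    then obtain k r j s where kr: "p = [:-t,1:] ^ (2 * k) * r" "poly r t > 0"
      and js: "q = [:-t,1:] ^ (2 * j) * s" "poly s t > 0"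
      using p q by (auto simp: even_positive_def)
    obtain w where w: "p + q = [:-t,1:] ^ (2 * min k j) * w" "poly w t > 0"
      using merge_even_powers[OF kr(2) js(2)] kr(1) js(1) by blast
    have "order t (p + q) = 2 * min k j" "order t q = 2 * j"
      using w kr js by (simp_all add: order_power_mult)
    moreover have "p + q \<noteq> 0" using w by auto
    ultimately show ?thesis using w by (auto simp: even_positive_def)
  qed (use p q in auto)
  thus "even_positive t (p + q)" "q \<noteq> 0 \<Longrightarrow> p + q \<noteq> 0 \<and> order t (p + q) \<le> order t q"
    by auto
qed

lemma even_positive_sum:
  "finite A \<Longrightarrow> (\<And>x. x \<in> A \<Longrightarrow> even_positive t (f x)) \<Longrightarrow> even_positive t (sum f A)"
  by (induction A rule: finite_induct) (auto simp: even_positive_add(1), simp add: even_positive_def)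

lemma even_positive_order_even:
  assumes "even_positive t p" "p \<noteq> 0" shows "even (order t p)"
  using assms by (auto simp: even_positive_def order_power_mult)

section \<open>Two Christoffel--Darboux type identities\<close>

definition vertex_wronskian :: "'a graph \<Rightarrow> 'a \<Rightarrow> real poly" where
  "vertex_wronskian G u =
     mu (del_verts G {u}) * pderiv (mu G) - mu G * pderiv (mu (del_verts G {u}))"

lemma vertex_wronskian_recurrence:
  assumes G: "simple_graph G" and u: "u \<in> verts G"
  shows "vertex_wronskian G u
       = mu (del_verts G {u}) ^ 2 + (\<Sum>w\<in>nbrs G u. vertex_wronskian (del_verts G {u}) w)"
proof -
  let ?A = "mu (del_verts G {u})"
  let ?C = "\<lambda>w. mu (del_verts G {u,w})"
  have rec: "mu G = [:0,1:] * ?A - sum ?C (nbrs G u)" by (rule mu_recurrence[OF G u])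
  have rec': "pderiv (mu G) = ?A + [:0,1:] * pderiv ?A - (\<Sum>w\<in>nbrs G u. pderiv (?C w))"
    unfolding rec by (simp add: pderiv_diff pderiv_mult pderiv_sum pderiv_pCons)
  have "vertex_wronskian G u = ?A * (?A + [:0,1:] * pderiv ?A - (\<Sum>w\<in>nbrs G u. pderiv (?C w)))
      - ([:0,1:] * ?A - sum ?C (nbrs G u)) * pderiv ?A"
    unfolding vertex_wronskian_def rec' by (subst rec) (rule refl)
  also have "\<dots> = ?A ^ 2 + (sum ?C (nbrs G u) * pderiv ?A - ?A * (\<Sum>w\<in>nbrs G u. pderiv (?C w)))"
    by (simp add: algebra_simps power2_eq_square)
  also have "\<dots> = ?A ^ 2 + (\<Sum>w\<in>nbrs G u. ?C w * pderiv ?A - ?A * pderiv (?C w))"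
    by (simp add: sum_distrib_left sum_distrib_right sum_subtractf)
  finally show ?thesis by (simp add: vertex_wronskian_def del_verts_del_verts insert_commute)
qed

lemma even_positive_vertex_wronskian:
  "simple_graph G \<Longrightarrow> u \<in> verts G \<Longrightarrow> even_positive t (vertex_wronskian G u)"
proof (induction "card (verts G)" arbitrary: G u rule: less_induct)
  case less
  have "card (verts (del_verts G {u})) < card (verts G)"
    using card_Diff1_less[OF finite_verts less.prems(2)] less.prems(1) by simp
  hence "even_positive t (vertex_wronskian (del_verts G {u}) w)" if "w \<in> nbrs G u" for w
    using less.hyps[OF _ simple_graph_del[OF less.prems(1)]] nbrsD[OF less.prems(1) that] by simp
  hence "even_positive t (\<Sum>w\<in>nbrs G u. vertex_wronskian (del_verts G {u}) w)"
    using finite_nbrs[OF less.prems(1)] even_positive_sum by blast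
  thus ?case unfolding vertex_wronskian_recurrence[OF less.prems]
    by (rule even_positive_add(1)[OF even_positive_square])
qed

definition pair_determinant :: "'a graph \<Rightarrow> 'a \<Rightarrow> 'a \<Rightarrow> real poly" where
  "pair_determinant G u v =
     mu (del_verts G {u}) * mu (del_verts G {v}) - mu G * mu (del_verts G {u,v})"

lemma pair_determinant_recurrence:
  assumes G: "simple_graph G" and u: "u \<in> verts G" and uv: "u \<noteq> v"
  shows "pair_determinant G u v = (if v \<in> nbrs G u then mu (del_verts G {u,v}) ^ 2 else 0)
           + (\<Sum>w\<in>nbrs G u - {v}. pair_determinant (del_verts G {u}) w v)"
proof -
  let ?A = "mu (del_verts G {u})"
  let ?B = "mu (del_verts G {u,v})"
  let ?C = "\<lambda>w. mu (del_verts G {u,w})"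
  let ?D = "\<lambda>w. mu (del_verts G {u,v,w})"
  let ?N = "nbrs G u"
  have rec_u: "mu G = [:0,1:] * ?A - sum ?C ?N" by (rule mu_recurrence[OF G u])
  have "mu (del_verts G {v}) = [:0,1:] * mu (del_verts (del_verts G {v}) {u})
     - (\<Sum>w\<in>nbrs (del_verts G {v}) u. mu (del_verts (del_verts G {v}) {u,w}))"
    using mu_recurrence[OF simple_graph_del[OF G]] u uv by simp
  hence rec_v: "mu (del_verts G {v}) = [:0,1:] * ?B - sum ?D (?N - {v})"
    using uv by (simp add: del_verts_del_verts nbrs_del insert_commute)
  have "sum ?C ?N = (if v \<in> ?N then ?B else 0) + sum ?C (?N - {v})"
    using finite_nbrs[OF G] by (simp add: sum_diff1)
  hence "pair_determinant G u v = (if v \<in> ?N then ?B ^ 2 else 0)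
      + (\<Sum>w\<in>?N - {v}. ?C w * ?B - ?A * ?D w)"
    unfolding pair_determinant_def rec_u rec_v
    by (simp add: algebra_simps power2_eq_square sum_distrib_left sum_distrib_right sum_subtractf)
  thus ?thesis
    by (simp add: pair_determinant_def del_verts_del_verts insert_commute)
qed

lemma even_positive_pair_determinant:
  "simple_graph G \<Longrightarrow> u \<in> verts G \<Longrightarrow> v \<in> verts G \<Longrightarrow> u \<noteq> v
     \<Longrightarrow> even_positive t (pair_determinant G u v)"
proof (induction "card (verts G)" arbitrary: G u v rule: less_induct)
  case less
  have "card (verts (del_verts G {u})) < card (verts G)"
    using card_Diff1_less[OF finite_verts less.prems(2)] less.prems(1) by simp
  hence "even_positive t (pair_determinant (del_verts G {u}) w v)" if "w \<in> nbrs G u - {v}" for w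
    using less.hyps[OF _ simple_graph_del[OF less.prems(1)]] nbrsD[OF less.prems(1)] that less.prems
    by auto
  hence "even_positive t (\<Sum>w\<in>nbrs G u - {v}. pair_determinant (del_verts G {u}) w v)"
    using finite_nbrs[OF less.prems(1)] even_positive_sum by (metis finite_Diff)
  moreover have "even_positive t (if v \<in> nbrs G u then mu (del_verts G {u,v}) ^ 2 else 0)"
    by (simp add: even_positive_square, simp add: even_positive_def)
  ultimately show ?case
    unfolding pair_determinant_recurrence[OF less.prems(1,2,4)] by (rule even_positive_add(1)[rotated])
qed

section \<open>Interlacing and rigidity of multiplicities\<close>

text \<open>Deleting a vertex lowers the multiplicity by at most one: the vertex Wronskian vanishes
  to order at least mult \<theta> G + mult \<theta> (G\u) - 1 and, containing the square \<mu>(G\u)^2,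
  to order at most 2 mult \<theta> (G\u).\<close>
lemma mult_le_mult_del_Suc:
  assumes G: "simple_graph G" and u: "u \<in> verts G"
  shows "mult t G \<le> mult t (del_verts G {u}) + 1"
proof -
  let ?A = "mu (del_verts G {u})"
  let ?S = "\<Sum>w\<in>nbrs G u. vertex_wronskian (del_verts G {u}) w"
  have "even_positive t ?S"
  proof (rule even_positive_sum[OF finite_nbrs[OF G]])
    fix w assume "w \<in> nbrs G u"
    hence "w \<in> verts (del_verts G {u})" using nbrsD[OF G] by simp
    thus "even_positive t (vertex_wronskian (del_verts G {u}) w)"
      by (rule even_positive_vertex_wronskian[OF simple_graph_del[OF G]])
  qed
  hence "vertex_wronskian G u \<noteq> 0 \<and> order t (vertex_wronskian G u) \<le> order t (?A ^ 2)"
    using even_positive_add(2)[OF _ even_positive_square] mu_nonzero[OF simple_graph_del[OF G]]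
    unfolding vertex_wronskian_recurrence[OF G u] by (simp add: add.commute)
  moreover have "[:-t,1:] ^ (order t (mu G) + order t ?A - 1) dvd vertex_wronskian G u"
    unfolding vertex_wronskian_def by (intro wronskian_power_dvd order_1)
  moreover have "order t (?A ^ 2) = 2 * order t ?A"
    using mu_nonzero[OF simple_graph_del[OF G]] by (simp add: power2_eq_square order_mult)
  ultimately have "order t (mu G) + order t ?A - 1 \<le> 2 * order t ?A"
    by (simp add: order_divides)
  thus ?thesis by (simp add: mult_eq_order G simple_graph_del)
qed

text \<open>Deleting a vertex raises the multiplicity by at most one: by the previous lemma every
  term of the vertex recurrence for \<mu>(G) is divisible by (x - t)^(mult t (G\u) - 1).\<close>
lemma mult_del_le_Suc_mult:
  assumes G: "simple_graph G" and u: "u \<in> verts G"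
  shows "mult t (del_verts G {u}) \<le> mult t G + 1"
proof -
  let ?X = "[:-t,1:]"
  define n where "n = order t (mu (del_verts G {u}))"
  have "?X ^ (n - 1) dvd mu (del_verts G {u})"
    unfolding n_def by (rule dvd_trans[OF _ order_1[of t]]) (simp add: le_imp_power_dvd)
  moreover have "?X ^ (n - 1) dvd mu (del_verts G {u,w})" if w: "w \<in> nbrs G u" for w
  proof -
    have "w \<in> verts (del_verts G {u})" using nbrsD[OF G w] by simp
    hence "mult t (del_verts G {u}) \<le> mult t (del_verts (del_verts G {u}) {w}) + 1"
      by (rule mult_le_mult_del_Suc[OF simple_graph_del[OF G]])
    hence "n - 1 \<le> order t (mu (del_verts G {u,w}))"
      by (simp add: n_def mult_eq_order simple_graph_del[OF G] del_verts_del_verts insert_commute)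
    thus ?thesis by (simp add: order_divides)
  qed
  ultimately have "?X ^ (n - 1) dvd mu G"
    unfolding mu_recurrence[OF G u] by (intro dvd_diff dvd_mult dvd_sum) auto
  hence "n - 1 \<le> order t (mu G)" using mu_nonzero[OF G] by (simp add: order_divides)
  thus ?thesis by (simp add: n_def mult_eq_order G simple_graph_del)
qed

text \<open>If a and b are \<theta>-positive, then \<theta> cannot have multiplicity mult \<theta> H + 1 in H \ {a,b}:
  otherwise the pair determinant would vanish to the odd order 2 mult \<theta> H + 1.\<close>
lemma positive_pair_mult:
  assumes H: "simple_graph H" and a: "a \<in> verts H" and b: "b \<in> verts H" and ab: "a \<noteq> b"
    and pos_a: "mult t (del_verts H {a}) = mult t H + 1"
    and pos_b: "mult t (del_verts H {b}) = mult t H + 1"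
  shows "mult t (del_verts H {a,b}) \<noteq> mult t H + 1"
proof
  assume pos_ab: "mult t (del_verts H {a,b}) = mult t H + 1"
  let ?n = "order t (mu H)"
  let ?P = "mu (del_verts H {a}) * mu (del_verts H {b})"
  let ?Q = "mu H * mu (del_verts H {a,b})"
  have Q0: "?Q \<noteq> 0" using mu_nonzero[OF H] mu_nonzero[OF simple_graph_del[OF H]] by simp
  have orders: "order t (mu (del_verts H {a})) = ?n + 1" "order t (mu (del_verts H {b})) = ?n + 1"
    "order t (mu (del_verts H {a,b})) = ?n + 1"
    using pos_a pos_b pos_ab by (simp_all add: mult_eq_order H simple_graph_del[OF H])
  have "order t ?Q = 2 * ?n + 1" using Q0 orders(3) by (simp add: order_mult)
  hence "Suc (order t ?Q) = (?n + 1) + (?n + 1)" by simp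
  hence "[:-t,1:] ^ Suc (order t ?Q) = [:-t,1:] ^ (?n + 1) * [:-t,1:] ^ (?n + 1)"
    by (metis power_add)
  moreover have "[:-t,1:] ^ (?n + 1) dvd mu (del_verts H {a})" "[:-t,1:] ^ (?n + 1) dvd mu (del_verts H {b})"
    by (subst order_divides, simp add: orders)+
  hence "[:-t,1:] ^ (?n + 1) * [:-t,1:] ^ (?n + 1) dvd ?P" by (rule mult_dvd_mono)
  ultimately have "pair_determinant H a b \<noteq> 0" and odd: "order t (pair_determinant H a b) = 2 * ?n + 1"
    using order_diff_dominated[OF Q0, of t ?P] \<open>order t ?Q = 2 * ?n + 1\<close>
    by (simp_all add: pair_determinant_def)
  hence "even (order t (pair_determinant H a b))"
    by (intro even_positive_order_even even_positive_pair_determinant H a b ab)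
  thus False using odd by simp
qed

section \<open>The combinatorial step and the theorem\<close>

lemma set_function_gap:
  fixes f :: "'v set \<Rightarrow> nat" and U :: "'v set"
  assumes fin: "finite U"
    and step: "\<And>X x. X \<subseteq> U \<Longrightarrow> x \<in> U - X \<Longrightarrow> f (insert x X) \<le> f X + 1 \<and> f X \<le> f (insert x X) + 1"
    and single: "\<And>u. u \<in> U \<Longrightarrow> f {u} = f {} + 1"
    and no_square: "\<And>W a b. W \<subseteq> U \<Longrightarrow> a \<in> U - W \<Longrightarrow> b \<in> U - W \<Longrightarrow> a \<noteq> b
        \<Longrightarrow> f (insert a W) = f W + 1 \<Longrightarrow> f (insert b W) = f W + 1
        \<Longrightarrow> f (insert a (insert b W)) \<noteq> f W + 1"
  shows "f U = f {} + card U \<or> f U + 2 \<le> f {} + card U"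
proof -
  let ?m = "f {}"
  have "V \<subseteq> U \<Longrightarrow> f V = ?m + card V \<or> f V + 2 \<le> ?m + card V" for V
  proof (induction "card V" arbitrary: V rule: less_induct)
    case less
    have finV: "finite V" using fin less.prems by (rule finite_subset[rotated])
    consider "card V = 0" | "card V = 1" | "card V \<ge> 2" by linarith
    then show ?case
    proof cases
      case 1 thus ?thesis using finV by simp
    next
      case 2 thus ?thesis using single less.prems by (auto simp: card_1_singleton_iff)
    next
      case 3
      then obtain a b where ab: "a \<in> V" "b \<in> V" "a \<noteq> b"
        using card_le_Suc0_iff_eq[OF finV] by (metis One_nat_def not_less_eq_eq numeral_2_eq_2)
      define W where "W = V - {a,b}"
      have W: "W \<subseteq> U" "a \<in> U - W" "b \<in> U - W" using ab less.prems by (auto simp: W_def)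
      have Va: "insert a W = V - {b}" and Vb: "insert b W = V - {a}"
        and Vab: "insert a (V - {a}) = V" using ab by (auto simp: W_def)
      have cards: "card (V - {a}) = card V - 1" "card (V - {b}) = card V - 1" "card W = card V - 2"
        using ab finV by (simp_all add: W_def card_Diff_subset)
      have IH: "f X = ?m + card X \<or> f X + 2 \<le> ?m + card X" if "X \<subset> V" for X
        using less.hyps[OF psubset_card_mono[OF finV that]] that less.prems by blast
      have psub: "V - {a} \<subset> V" "V - {b} \<subset> V" "W \<subset> V" using ab by (auto simp: W_def)
      have IH_a: "f (V - {a}) = ?m + card V - 1 \<or> f (V - {a}) + 3 \<le> ?m + card V"
        using IH[OF psub(1)] cards(1) 3 by arith
      have IH_b: "f (V - {b}) = ?m + card V - 1 \<or> f (V - {b}) + 3 \<le> ?m + card V"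
        using IH[OF psub(2)] cards(2) 3 by arith
      have IH_W: "f W = ?m + card V - 2 \<or> f W + 4 \<le> ?m + card V"
        using IH[OF psub(3)] cards(3) 3 by arith
      have step_a: "f (V - {a}) \<le> f V + 1" "f V \<le> f (V - {a}) + 1"
        using step[of "V - {a}" a] ab less.prems by (auto simp: insert_absorb)
      have step_b: "f (V - {b}) \<le> f V + 1" "f V \<le> f (V - {b}) + 1"
        using step[of "V - {b}" b] ab less.prems by (auto simp: insert_absorb)
      have step_W: "f W \<le> f (V - {b}) + 1" "f (V - {b}) \<le> f W + 1"
        using step[OF W(1,2)] Va by auto
      show ?thesis
      proof (rule ccontr)
        assume "\<not> ?thesis"
        hence bad: "f V \<noteq> ?m + card V" "?m + card V < f V + 2" by auto
        have "f (V - {a}) = ?m + card V - 1" "f (V - {b}) = ?m + card V - 1"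
          using IH_a IH_b bad step_a step_b by linarith+
        moreover have "f V = ?m + card V - 1" using calculation bad step_b 3 by linarith
        moreover have "f W = ?m + card V - 2" using IH_W step_W calculation by linarith
        ultimately have "f (V - {b}) = f W + 1" "f (V - {a}) = f W + 1" "f V = f W + 1"
          using 3 by linarith+
        thus False using no_square[OF W ab(3)] unfolding Va Vb Vab by blast
      qed
    qed
  qed
  thus ?thesis by simp
qed

theorem lemma3p12:
  fixes G :: "'a graph" and \<theta> :: real and U :: "'a set"
  assumes "simple_graph G"
    and "U \<subseteq> verts G"
    and "\<forall>u\<in>U. theta_positive \<theta> G u"
  shows "mult \<theta> (del_verts G U) = mult \<theta> G + card U \<or>
         mult \<theta> (del_verts G U) + 2 \<le> mult \<theta> G + card U"
proof -
  let ?f = "\<lambda>X. mult \<theta> (del_verts G X)"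
  have sub: "simple_graph (del_verts G X)" for X using assms(1) by (rule simple_graph_del)
  have "?f U = ?f {} + card U \<or> ?f U + 2 \<le> ?f {} + card U"
  proof (rule set_function_gap)
    show "finite U" using finite_verts[OF assms(1)] assms(2) by (rule finite_subset[rotated])
    show "?f (insert x X) \<le> ?f X + 1 \<and> ?f X \<le> ?f (insert x X) + 1"
      if "X \<subseteq> U" "x \<in> U - X" for X x
      using mult_del_le_Suc_mult[OF sub, of x X \<theta>] mult_le_mult_del_Suc[OF sub, of x X \<theta>]
        that assms(2) by (auto simp: del_verts_insert)
    show "?f {u} = ?f {} + 1" if "u \<in> U" for u
      using assms(3) that by (simp add: theta_positive_def)
    show "?f (insert a (insert b W)) \<noteq> ?f W + 1"
      if "W \<subseteq> U" "a \<in> U - W" "b \<in> U - W" "a \<noteq> b"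
        "?f (insert a W) = ?f W + 1" "?f (insert b W) = ?f W + 1" for W a b
      using positive_pair_mult[OF sub, of a W b \<theta>] that assms(2)
      by (auto simp: del_verts_del_verts insert_commute)
  qed
  thus ?thesis by simp
qed

end
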